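(* Let $A=\{\mathbf{a}_1,\dots,\mathbf{a}_m\}\subset\mathbb{Z}^n$ with $\mathbb{N}A$ an affine semigroup, and let $E_1,E_2$ be nonempty disjoint subsets of $\{1,\dots,m\}$ with $E_1\cup E_2=\{1,\dots,m\}$. Then $\mathbb{N}A$ is the s-gluing of $\mathbb{N}A^{E_1}$ and $\mathbb{N}A^{E_2}$ if and only if $\sigma=\mathrm{pos}_{\mathbb{Q}}(A)$ is the direct sum $\sigma_{E_1}\oplus\sigma_{E_2}$, i.e. if and only if there exists $\mathbf{a}\in\sigma_{E_1}\cap\sigma_{E_2}$ with $\mathrm{span}_{\mathbb{Q}}(\sigma_{E_1})\cap\mathrm{span}_{\mathbb{Q}}(\sigma_{E_2})=\mathbb{Q}\mathbf{a}$.
   Context: $\mathbb{N}A$ is the set of nonnegative integer combinations of $A$; an affine semigroup is a finitely generated subsemigroup $S\subset\mathbb{Z}^n$ with $S\cap(-S)=\{\mathbf0\}$. For $E\subset\{1,\dots,m\}$, $A^E=\{\mathbf{a}_i:i\in E\}$ and $\sigma_E=\mathrm{pos}_{\mathbb{Q}}(A^E)$ (nonnegative rational combinations); note $\sigma=\mathrm{pos}_{\mathbb{Q}}(\sigma_{E_1}\cup\sigma_{E_2})$. $\mathbb{N}A$ is the s-gluing of $\mathbb{N}A^{E_1}$ and $\mathbb{N}A^{E_2}$ if there is an integer vector $\mathbf{a}$ with $\mathbb{Z}\mathbf{a}=\mathbb{Z}A^{E_1}\cap\mathbb{Z}A^{E_2}$ and $t\mathbf{a}\in\mathbb{N}A^{E_1}\cap\mathbb{N}A^{E_2}$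 for some positive integer $t$. *)

theory Defs
  imports "HOL-Analysis.Analysis"
begin

text \<open>Generators a_1,...,a_m of Z^n are an indexed family a :: nat => int^'n, indices {1..m}.
  Integer vectors are embedded in Q^n componentwise.\<close>

definition ratv :: "int ^ 'n \<Rightarrow> rat ^ 'n" where
  "ratv v = (\<chi> i. of_int (v $ i))"

definition NA :: "(nat \<Rightarrow> int ^ 'n) \<Rightarrow> nat set \<Rightarrow> (int ^ 'n) set" where
  "NA a E = {\<Sum>i\<in>E. (int (c i)) *s a i | c :: nat \<Rightarrow> nat. True}"

definition ZA :: "(nat \<Rightarrow> int ^ 'n) \<Rightarrow> nat set \<Rightarrow> (int ^ 'n) set" where
  "ZA a E = {\<Sum>i\<in>E. c i *s a i | c :: nat \<Rightarrow> int. True}"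

definition posQ :: "(nat \<Rightarrow> int ^ 'n) \<Rightarrow> nat set \<Rightarrow> (rat ^ 'n) set" where
  "posQ a E = {\<Sum>i\<in>E. c i *s ratv (a i) | c :: nat \<Rightarrow> rat. \<forall>i\<in>E. c i \<ge> 0}"

definition spanQ :: "(rat ^ 'n) set \<Rightarrow> (rat ^ 'n) set" where
  "spanQ S = {\<Sum>x\<in>F. c x *s x | F c. finite F \<and> F \<subseteq> S}"

text \<open>affine semigroup: N A (finitely generated by construction) is pointed\<close>
definition affine_semigroup :: "(int ^ 'n) set \<Rightarrow> bool" where
  "affine_semigroup S \<longleftrightarrow> S \<inter> uminus ` S = {0}"

definition s_gluing :: "(nat \<Rightarrow> int ^ 'n) \<Rightarrow> nat set \<Rightarrow> nat set \<Rightarrow> bool" where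
  "s_gluing a E1 E2 \<longleftrightarrow>
     (\<exists>v :: int ^ 'n. ZA a E1 \<inter> ZA a E2 = {k *s v | k :: int. True} \<and>
        (\<exists>t :: nat. t > 0 \<and> int t *s v \<in> NA a E1 \<inter> NA a E2))"

end

theory Submission
  imports Defs
begin

text \<open>The rational span of \<open>\<sigma>\<^sub>E\<close> is the set \<open>QA a E\<close> of rational combinations of the
  generators. Clearing denominators sends rational points of \<open>QA a E\<^sub>1 \<inter> QA a E\<^sub>2\<close> into the
  lattice \<open>ZA a E\<^sub>1 \<inter> ZA a E\<^sub>2\<close>, and points of \<open>\<sigma>\<^sub>E\<^sub>1 \<inter> \<sigma>\<^sub>E\<^sub>2\<close> into \<open>NA a E\<^sub>1 \<inter> NA a E\<^sub>2\<close>.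
  Hence a lattice line \<open>\<int>w\<close> gives the rational line \<open>\<rat>w\<close>, spanned by the point \<open>t w\<close> of
  both cones. Conversely, if the two spans meet in a line \<open>\<rat>v\<close> with \<open>v\<close> in both cones, then
  the lattice \<open>ZA a E\<^sub>1 \<inter> ZA a E\<^sub>2\<close> lies on that line and contains a positive multiple \<open>p\<close> of
  \<open>v\<close> lying in \<open>NA a E\<^sub>1 \<inter> NA a E\<^sub>2\<close>. A subgroup of \<open>\<int>\<^sup>n\<close> on a rational line is cyclic, being
  mapped injectively into \<open>\<int>\<close> by a coordinate, and its generator can be oriented so that \<open>p\<close>
  is a positive multiple of it.\<close>

lemma ratv_zero [simp]: "ratv 0 = 0"
  by (simp add: ratv_def vec_eq_iff)

lemma ratv_scale [simp]: "ratv (k *s x) = of_int k *s ratv x"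
  by (simp add: ratv_def vec_eq_iff)

lemma ratv_sum [simp]: "ratv (sum f E) = (\<Sum>i\<in>E. ratv (f i))"
  by (simp add: ratv_def vec_eq_iff)

lemma ratv_eq_iff [simp]: "ratv x = ratv y \<longleftrightarrow> x = y"
  by (simp add: ratv_def vec_eq_iff)

lemma ratv_eq_0_iff [simp]: "ratv x = 0 \<longleftrightarrow> x = 0"
  using ratv_eq_iff[of x 0] by simp

lemma ratv_nth [simp]: "ratv x $ i = of_int (x $ i)"
  by (simp add: ratv_def)

definition QA :: "(nat \<Rightarrow> int ^ 'n) \<Rightarrow> nat set \<Rightarrow> (rat ^ 'n) set" where
  "QA a E = {\<Sum>i\<in>E. c i *s ratv (a i) | c :: nat \<Rightarrow> rat. True}"

lemma ZA_diff: "x \<in> ZA a E \<Longrightarrow> y \<in> ZA a E \<Longrightarrow> x - y \<in> ZA a E"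
proof -
  assume "x \<in> ZA a E" "y \<in> ZA a E"
  then obtain c d where "x = (\<Sum>i\<in>E. c i *s a i)" "y = (\<Sum>i\<in>E. d i *s a i)"
    unfolding ZA_def by auto
  then have "x - y = (\<Sum>i\<in>E. (c i - d i) *s a i)"
    by (simp add: vec_eq_iff sum_subtractf algebra_simps)
  then show ?thesis unfolding ZA_def by (auto intro!: exI[of _ "\<lambda>i. c i - d i"])
qed

lemma ZA_scale: "x \<in> ZA a E \<Longrightarrow> k *s x \<in> ZA a E"
proof -
  assume "x \<in> ZA a E"
  then obtain c where "x = (\<Sum>i\<in>E. c i *s a i)"
    unfolding ZA_def by auto
  then have "k *s x = (\<Sum>i\<in>E. (k * c i) *s a i)"
    by (simp add: vec_eq_iff sum_distrib_left algebra_simps)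
  then show ?thesis unfolding ZA_def by (auto intro!: exI[of _ "\<lambda>i. k * c i"])
qed

lemma NA_scale: "x \<in> NA a E \<Longrightarrow> int k *s x \<in> NA a E"
proof -
  assume "x \<in> NA a E"
  then obtain c where "x = (\<Sum>i\<in>E. int (c i) *s a i)"
    unfolding NA_def by auto
  then have "int k *s x = (\<Sum>i\<in>E. int (k * c i) *s a i)"
    by (simp add: vec_eq_iff sum_distrib_left algebra_simps)
  then show ?thesis unfolding NA_def by (auto intro!: exI[of _ "\<lambda>i. k * c i"])
qed

lemma NA_subset_ZA: "NA a E \<subseteq> ZA a E"
proof
  fix x assume "x \<in> NA a E"
  then obtain c where "x = (\<Sum>i\<in>E. int (c i) *s a i)"
    unfolding NA_def by auto
  then show "x \<in> ZA a E"
    unfolding ZA_def by (auto intro!: exI[of _ "\<lambda>i. int (c i)"])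
qed

lemma ratv_NA_subset_posQ: "ratv ` NA a E \<subseteq> posQ a E"
proof
  fix y assume "y \<in> ratv ` NA a E"
  then obtain c where "y = ratv (\<Sum>i\<in>E. int (c i) *s a i)"
    unfolding NA_def by auto
  then have "y = (\<Sum>i\<in>E. of_nat (c i) *s ratv (a i))"
    by simp
  then show "y \<in> posQ a E"
    unfolding posQ_def by (auto intro!: exI[of _ "\<lambda>i. of_nat (c i)"])
qed

lemma ratv_ZA_subset_QA: "ratv ` ZA a E \<subseteq> QA a E"
proof
  fix y assume "y \<in> ratv ` ZA a E"
  then obtain c where "y = ratv (\<Sum>i\<in>E. c i *s a i)"
    unfolding ZA_def by auto
  then have "y = (\<Sum>i\<in>E. of_int (c i) *s ratv (a i))"
    by simp
  then show "y \<in> QA a E"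
    unfolding QA_def by (auto intro!: exI[of _ "\<lambda>i. of_int (c i)"])
qed

lemma subspace_QA: "vec.subspace (QA a E)"
proof (rule vec.subspaceI)
  show "0 \<in> QA a E"
    unfolding QA_def by (auto intro!: exI[of _ "\<lambda>_. 0"])
next
  fix x y assume "x \<in> QA a E" "y \<in> QA a E"
  then obtain c d where "x = (\<Sum>i\<in>E. c i *s ratv (a i))" "y = (\<Sum>i\<in>E. d i *s ratv (a i))"
    unfolding QA_def by auto
  then have "x + y = (\<Sum>i\<in>E. (c i + d i) *s ratv (a i))"
    by (simp add: vec_eq_iff sum.distrib algebra_simps)
  then show "x + y \<in> QA a E"
    unfolding QA_def by (auto intro!: exI[of _ "\<lambda>i. c i + d i"])
next
  fix k x assume "x \<in> QA a E"
  then obtain c where "x = (\<Sum>i\<in>E. c i *s ratv (a i))"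
    unfolding QA_def by auto
  then have "k *s x = (\<Sum>i\<in>E. (k * c i) *s ratv (a i))"
    by (simp add: vec_eq_iff sum_distrib_left algebra_simps)
  then show "k *s x \<in> QA a E"
    unfolding QA_def by (auto intro!: exI[of _ "\<lambda>i. k * c i"])
qed

lemma ratv_generator_in_posQ:
  assumes "finite E" "i \<in> E"
  shows "ratv (a i) \<in> posQ a E"
proof -
  have "ratv (a i) = (\<Sum>j\<in>E. (if j = i then 1 else 0) *s ratv (a j))"
    using assms by (simp add: if_distrib[of "\<lambda>r. r *s v" for v] cong: if_cong)
  then show ?thesis
    unfolding posQ_def by (auto intro!: exI[of _ "\<lambda>j. if j = i then 1 else 0"])
qed

lemma spanQ_posQ_eq_QA:
  assumes "finite E"
  shows "spanQ (posQ a E) = QA a E"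
proof
  have "posQ a E \<subseteq> QA a E"
    unfolding posQ_def QA_def by blast
  then show "spanQ (posQ a E) \<subseteq> QA a E"
    unfolding spanQ_def vec.span_explicit[symmetric]
    by (rule vec.span_minimal[OF _ subspace_QA])
next
  show "QA a E \<subseteq> spanQ (posQ a E)"
  proof
    fix x assume "x \<in> QA a E"
    then obtain c where x: "x = (\<Sum>i\<in>E. c i *s ratv (a i))"
      unfolding QA_def by auto
    show "x \<in> spanQ (posQ a E)"
      unfolding spanQ_def vec.span_explicit[symmetric] x
      by (intro vec.span_sum vec.span_scale vec.span_base ratv_generator_in_posQ assms)
  qed
qed

subsection \<open>Clearing denominators\<close>

lemma common_denominator:
  fixes c :: "nat \<Rightarrow> rat"
  assumes "finite E"
  shows "\<exists>d::int. d > 0 \<and> (\<exists>k. \<forall>i\<in>E. of_int d * c i = of_int (k i))"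
  using assms
proof (induction E rule: finite_induct)
  case empty
  show ?case by (intro exI[of _ 1]) auto
next
  case (insert j E)
  then obtain d k where d: "d > 0" and k: "\<forall>i\<in>E. of_int d * c i = of_int (k i)"
    by blast
  obtain nn dd where q: "quotient_of (c j) = (nn, dd)"
    by (cases "quotient_of (c j)")
  have dd: "dd > 0" and cj: "c j = of_int nn / of_int dd"
    using quotient_of_denom_pos[OF q] quotient_of_div[OF q] by simp_all
  let ?k = "(\<lambda>i. k i * dd)(j := d * nn)"
  have "\<forall>i\<in>insert j E. of_int (d * dd) * c i = of_int (?k i)"
    using k dd cj by (auto simp: algebra_simps)
  then show ?case
    using d dd by (intro exI[of _ "d * dd"] conjI exI[of _ ?k]) auto
qed

lemma QA_clear_denominators:
  assumes "finite E" "x \<in> QA a E"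
  shows "\<exists>d::int. d > 0 \<and> (\<exists>z\<in>ZA a E. of_int d *s x = ratv z)"
proof -
  obtain c where x: "x = (\<Sum>i\<in>E. c i *s ratv (a i))"
    using assms(2) unfolding QA_def by auto
  obtain d k where d: "d > 0" and k: "\<forall>i\<in>E. of_int d * c i = of_int (k i)"
    using common_denominator[OF assms(1)] by blast
  have "of_int d *s x = (\<Sum>i\<in>E. (of_int d * c i) *s ratv (a i))"
    unfolding x by (simp add: vec_eq_iff sum_distrib_left algebra_simps)
  also have "\<dots> = ratv (\<Sum>i\<in>E. k i *s a i)"
    using k by simp
  finally show ?thesis
    using d unfolding ZA_def by blast
qed

lemma posQ_clear_denominators:
  assumes "finite E" "x \<in> posQ a E"
  shows "\<exists>d::int. d > 0 \<and> (\<exists>z\<in>NA a E. of_int d *s x = ratv z)"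
proof -
  obtain c where x: "x = (\<Sum>i\<in>E. c i *s ratv (a i))" and c: "\<forall>i\<in>E. c i \<ge> 0"
    using assms(2) unfolding posQ_def by auto
  obtain d k where d: "d > 0" and k: "\<forall>i\<in>E. of_int d * c i = of_int (k i)"
    using common_denominator[OF assms(1)] by blast
  have k_nonneg: "k i \<ge> 0" if "i \<in> E" for i
    using k c d that by (metis of_int_0_le_iff zero_le_mult_iff of_int_pos less_le)
  have "of_int d *s x = (\<Sum>i\<in>E. (of_int d * c i) *s ratv (a i))"
    unfolding x by (simp add: vec_eq_iff sum_distrib_left algebra_simps)
  also have "\<dots> = ratv (\<Sum>i\<in>E. int (nat (k i)) *s a i)"
    using k k_nonneg by simp
  finally have "of_int d *s x = ratv (\<Sum>i\<in>E. int (nat (k i)) *s a i)" .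
  moreover have "(\<Sum>i\<in>E. int (nat (k i)) *s a i) \<in> NA a E"
    unfolding NA_def by (auto intro!: exI[of _ "\<lambda>i. nat (k i)"])
  ultimately show ?thesis
    using d by blast
qed

lemma clear_denominators_Int:
  assumes "of_int d\<^sub>1 *s x = ratv z\<^sub>1" "z\<^sub>1 \<in> S\<^sub>1" "d\<^sub>1 > 0"
    and "of_int d\<^sub>2 *s x = ratv z\<^sub>2" "z\<^sub>2 \<in> S\<^sub>2" "d\<^sub>2 > 0"
    and "\<And>z k. z \<in> S\<^sub>1 \<Longrightarrow> int k *s z \<in> S\<^sub>1" "\<And>z k. z \<in> S\<^sub>2 \<Longrightarrow> int k *s z \<in> S\<^sub>2"
  shows "\<exists>d::int. d > 0 \<and> (\<exists>z\<in>S\<^sub>1 \<inter> S\<^sub>2. of_int d *s x = ratv z)"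
proof -
  have "ratv (d\<^sub>2 *s z\<^sub>1) = of_int (d\<^sub>1 * d\<^sub>2) *s x" "ratv (d\<^sub>1 *s z\<^sub>2) = of_int (d\<^sub>1 * d\<^sub>2) *s x"
    by (simp_all flip: assms(1,4) add: vec_eq_iff)
  moreover have "d\<^sub>2 *s z\<^sub>1 \<in> S\<^sub>1" "d\<^sub>1 *s z\<^sub>2 \<in> S\<^sub>2"
    using assms(7)[of z\<^sub>1 "nat d\<^sub>2"] assms(8)[of z\<^sub>2 "nat d\<^sub>1"] assms(2,3,5,6) by simp_all
  ultimately show ?thesis
    using assms(3,6) by (metis IntI ratv_eq_iff zero_less_mult_iff)
qed

subsection \<open>Subgroups of \<open>\<int>\<^sup>n\<close> on a rational line\<close>

lemma int_ideal_has_positive_generator: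
  fixes H :: "int set"
  assumes "h \<in> H" "h \<noteq> 0"
    and diff: "\<And>x y. x \<in> H \<Longrightarrow> y \<in> H \<Longrightarrow> x - y \<in> H"
    and scale: "\<And>k x. x \<in> H \<Longrightarrow> k * x \<in> H"
  shows "\<exists>g\<in>H. g > 0 \<and> (\<forall>x\<in>H. g dvd x)"
proof -
  define P where "P n \<longleftrightarrow> n > 0 \<and> int n \<in> H" for n :: nat
  have "\<bar>h\<bar> \<in> H"
    using scale[OF assms(1), of "sgn h"] by (simp add: abs_sgn mult.commute)
  then have "P (nat \<bar>h\<bar>)"
    using assms(2) by (simp add: P_def)
  then have Pg: "P (LEAST n. P n)" and least: "\<And>n. P n \<Longrightarrow> (LEAST n. P n) \<le> n"
    by (auto intro: LeastI Least_le)
  define g where "g = int (LEAST n. P n)"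
  have g: "g \<in> H" "g > 0"
    using Pg by (simp_all add: g_def P_def)
  have "g dvd x" if "x \<in> H" for x
  proof (rule ccontr)
    assume "\<not> g dvd x"
    then have "x mod g \<noteq> 0" "0 \<le> x mod g" "x mod g < g"
      using g(2) by (simp_all add: dvd_eq_mod_eq_0)
    moreover have "x mod g \<in> H"
      using diff[OF that scale[OF g(1), of "x div g"]] by (simp add: minus_div_mult_eq_mod)
    ultimately have "P (nat (x mod g))"
      by (simp add: P_def)
    then show False
      using least \<open>0 \<le> x mod g\<close> \<open>x mod g < g\<close> unfolding g_def by fastforce
  qed
  then show ?thesis
    using g by blast
qed

lemma eq_0_if_on_rational_line:
  assumes "ratv z = r *s ratv p" "p $ j \<noteq> 0" "z $ j = 0"
  shows "z = 0"
proof -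
  have "r * of_int (p $ j) = 0"
    using assms(1,3) by (metis ratv_nth vector_smult_component of_int_0)
  then show ?thesis
    using assms(1,2) by simp
qed

lemma subgroup_nth_generator:
  fixes G :: "(int ^ 'n) set"
  assumes "p \<in> G" "p $ j \<noteq> 0"
    and diff: "\<And>x y. x \<in> G \<Longrightarrow> y \<in> G \<Longrightarrow> x - y \<in> G"
    and scale: "\<And>k x. x \<in> G \<Longrightarrow> k *s x \<in> G"
  shows "\<exists>w\<in>G. w $ j > 0 \<and> (\<forall>z\<in>G. w $ j dvd z $ j)"
proof -
  have "\<exists>g\<in>(\<lambda>z. z $ j) ` G. g > 0 \<and> (\<forall>x\<in>(\<lambda>z. z $ j) ` G. g dvd x)"
  proof (rule int_ideal_has_positive_generator)
    show "p $ j \<in> (\<lambda>z. z $ j) ` G"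
      using assms(1) by blast
  next
    fix x y assume "x \<in> (\<lambda>z. z $ j) ` G" "y \<in> (\<lambda>z. z $ j) ` G"
    then obtain u u' where "u \<in> G" "u' \<in> G" "x = u $ j" "y = u' $ j"
      by blast
    then show "x - y \<in> (\<lambda>z. z $ j) ` G"
      using diff by (intro rev_image_eqI[of "u - u'"]) simp_all
  next
    fix k x assume "x \<in> (\<lambda>z. z $ j) ` G"
    then obtain u where "u \<in> G" "x = u $ j"
      by blast
    then show "k * x \<in> (\<lambda>z. z $ j) ` G"
      using scale by (intro rev_image_eqI[of "k *s u"]) simp_all
  qed (fact assms(2))
  then show ?thesis
    by blast
qed

lemma subgroup_on_rational_line_cyclic:
  fixes G :: "(int ^ 'n) set"
  assumes "p \<in> G"
    and diff: "\<And>x y. x \<in> G \<Longrightarrow> y \<in> G \<Longrightarrow> x - y \<in> G"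
    and scale: "\<And>k x. x \<in> G \<Longrightarrow> k *s x \<in> G"
    and on_line: "\<And>z. z \<in> G \<Longrightarrow> \<exists>r. ratv z = r *s ratv p"
  shows "\<exists>w (t::nat). t > 0 \<and> G = {k *s w | k. True} \<and> int t *s w = p"
proof (cases "p = 0")
  case True
  then have "G = {0}"
    using on_line assms(1) by fastforce
  then have "G = {k *s 0 | k. True}"
    by simp
  then show ?thesis
    using True by (intro exI[of _ 0] exI[of _ 1]) simp
next
  case False
  then obtain j where pj: "p $ j \<noteq> 0"
    by (auto simp: vec_eq_iff)
  obtain w\<^sub>0 where w\<^sub>0: "w\<^sub>0 \<in> G" "w\<^sub>0 $ j > 0" and dvd: "\<And>z. z \<in> G \<Longrightarrow> w\<^sub>0 $ j dvd z $ j"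
    using subgroup_nth_generator[OF assms(1) pj diff scale] by blast
  define w where "w = sgn (p $ j) *s w\<^sub>0"
  have "w \<in> G"
    unfolding w_def using scale w\<^sub>0(1) by blast
  have multiple: "z = (z $ j div w $ j) *s w" if "z \<in> G" for z
  proof -
    have "w $ j dvd z $ j"
      using dvd[OF that] pj by (simp add: w_def sgn_if)
    then have "(z - (z $ j div w $ j) *s w) $ j = 0"
      by simp
    moreover have "z - (z $ j div w $ j) *s w \<in> G"
      using diff[OF that scale[OF \<open>w \<in> G\<close>]] .
    ultimately have "z - (z $ j div w $ j) *s w = 0"
      using on_line eq_0_if_on_rational_line pj by blast
    then show ?thesis
      by simp
  qed
  have "0 < p $ j div w $ j"
    using dvd[OF assms(1)] w\<^sub>0(2) pj
    by (auto simp: w_def sgn_if zdvd_imp_le pos_imp_zdiv_pos_iff div_minus_right)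
  moreover have "G = {k *s w | k. True}"
    using multiple scale \<open>w \<in> G\<close> by blast
  ultimately show ?thesis
    using multiple[OF assms(1)] by (intro exI[of _ w] exI[of _ "nat (p $ j div w $ j)"]) simp
qed

lemma multiples_scale_eq:
  fixes v :: "'a::field ^ 'n"
  assumes "c \<noteq> 0"
  shows "{q *s (c *s v) | q. True} = {q *s v | q. True}"
proof -
  have "q *s v = (q / c) *s (c *s v)" for q
    using assms by (simp add: vec_eq_iff)
  moreover have "q *s (c *s v) = (q * c) *s v" for q
    by (simp add: vec_eq_iff)
  ultimately show ?thesis
    by blast
qed

lemma QA_Int_eq_multiples_if_ZA_Int_eq_multiples:
  assumes "finite E\<^sub>1" "finite E\<^sub>2" "ZA a E\<^sub>1 \<inter> ZA a E\<^sub>2 = {k *s w | k. True}"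
  shows "QA a E\<^sub>1 \<inter> QA a E\<^sub>2 = {q *s ratv w | q. True}"
proof (intro equalityI subsetI)
  fix x assume x: "x \<in> QA a E\<^sub>1 \<inter> QA a E\<^sub>2"
  obtain d\<^sub>1 z\<^sub>1 where d\<^sub>1: "of_int d\<^sub>1 *s x = ratv z\<^sub>1" "z\<^sub>1 \<in> ZA a E\<^sub>1" "d\<^sub>1 > 0"
    using QA_clear_denominators[OF assms(1)] x by blast
  obtain d\<^sub>2 z\<^sub>2 where d\<^sub>2: "of_int d\<^sub>2 *s x = ratv z\<^sub>2" "z\<^sub>2 \<in> ZA a E\<^sub>2" "d\<^sub>2 > 0"
    using QA_clear_denominators[OF assms(2)] x by blast
  obtain d z where d: "d > 0" "z \<in> ZA a E\<^sub>1 \<inter> ZA a E\<^sub>2" "of_int d *s x = ratv z"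
    using clear_denominators_Int[OF d\<^sub>1 d\<^sub>2 ZA_scale ZA_scale] by blast
  then obtain k where "z = k *s w"
    using assms(3) by blast
  then have "x = (of_int k / of_int d) *s ratv w"
    using d(1,3) by (simp add: vec_eq_iff field_simps)
  then show "x \<in> {q *s ratv w | q. True}"
    by blast
next
  fix x assume "x \<in> {q *s ratv w | q. True}"
  then obtain q where x: "x = q *s ratv w"
    by blast
  have "w \<in> ZA a E\<^sub>1 \<inter> ZA a E\<^sub>2"
    using assms(3) by (auto intro: exI[of _ 1])
  then have "ratv w \<in> QA a E\<^sub>1" "ratv w \<in> QA a E\<^sub>2"
    using ratv_ZA_subset_QA by blast+
  then show "x \<in> QA a E\<^sub>1 \<inter> QA a E\<^sub>2"
    unfolding x using vec.subspace_scale[OF subspace_QA] by blast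
qed

lemma QA_Int_eq_multiples_of_posQ_if_s_gluing:
  assumes "finite E\<^sub>1" "finite E\<^sub>2" "s_gluing a E\<^sub>1 E\<^sub>2"
  shows "\<exists>v \<in> posQ a E\<^sub>1 \<inter> posQ a E\<^sub>2. QA a E\<^sub>1 \<inter> QA a E\<^sub>2 = {q *s v | q. True}"
proof -
  obtain w t where G: "ZA a E\<^sub>1 \<inter> ZA a E\<^sub>2 = {k *s w | k. True}"
    and t: "t > 0" "int t *s w \<in> NA a E\<^sub>1 \<inter> NA a E\<^sub>2"
    using assms(3) unfolding s_gluing_def by blast
  have "ratv (int t *s w) \<in> posQ a E\<^sub>1 \<inter> posQ a E\<^sub>2"
    using t(2) ratv_NA_subset_posQ by blast
  moreover have "QA a E\<^sub>1 \<inter> QA a E\<^sub>2 = {q *s ratv (int t *s w) | q. True}"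
    using QA_Int_eq_multiples_if_ZA_Int_eq_multiples[OF assms(1,2) G]
      multiples_scale_eq[of "of_nat t" "ratv w"] t(1)
    by simp
  ultimately show ?thesis
    by blast
qed

lemma s_gluing_if_QA_Int_eq_multiples_of_posQ:
  assumes "finite E\<^sub>1" "finite E\<^sub>2" "v \<in> posQ a E\<^sub>1 \<inter> posQ a E\<^sub>2"
    and line: "QA a E\<^sub>1 \<inter> QA a E\<^sub>2 = {q *s v | q. True}"
  shows "s_gluing a E\<^sub>1 E\<^sub>2"
proof -
  obtain d\<^sub>1 n\<^sub>1 where d\<^sub>1: "of_int d\<^sub>1 *s v = ratv n\<^sub>1" "n\<^sub>1 \<in> NA a E\<^sub>1" "d\<^sub>1 > 0"
    using posQ_clear_denominators[OF assms(1)] assms(3) by blast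
  obtain d\<^sub>2 n\<^sub>2 where d\<^sub>2: "of_int d\<^sub>2 *s v = ratv n\<^sub>2" "n\<^sub>2 \<in> NA a E\<^sub>2" "d\<^sub>2 > 0"
    using posQ_clear_denominators[OF assms(2)] assms(3) by blast
  obtain d p where d: "d > 0" and p: "p \<in> NA a E\<^sub>1 \<inter> NA a E\<^sub>2" "of_int d *s v = ratv p"
    using clear_denominators_Int[OF d\<^sub>1 d\<^sub>2 NA_scale NA_scale] by blast
  have on_line: "\<exists>r. ratv z = r *s ratv p" if "z \<in> ZA a E\<^sub>1 \<inter> ZA a E\<^sub>2" for z
  proof -
    have "ratv z \<in> QA a E\<^sub>1 \<inter> QA a E\<^sub>2"
      using that ratv_ZA_subset_QA by blast
    then obtain q where "ratv z = q *s v"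
      using line by blast
    then have "ratv z = (q / of_int d) *s ratv p"
      using d by (simp flip: p(2) add: vec_eq_iff)
    then show ?thesis
      by blast
  qed
  have "p \<in> ZA a E\<^sub>1 \<inter> ZA a E\<^sub>2"
    using p(1) NA_subset_ZA by blast
  then have "\<exists>w (t::nat). t > 0 \<and> ZA a E\<^sub>1 \<inter> ZA a E\<^sub>2 = {k *s w | k. True} \<and> int t *s w = p"
    by (rule subgroup_on_rational_line_cyclic) (auto intro: ZA_diff ZA_scale on_line)
  then show ?thesis
    unfolding s_gluing_def using p(1) by metis
qed

theorem proposition4p2:
  fixes a :: "nat \<Rightarrow> int ^ 'n" and m :: nat and E1 E2 :: "nat set"
  assumes "inj_on a {1..m}"
    and "affine_semigroup (NA a {1..m})"
    and "E1 \<noteq> {}" and "E2 \<noteq> {}" and "E1 \<inter> E2 = {}" and "E1 \<union> E2 = {1..m}"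
  shows "s_gluing a E1 E2 \<longleftrightarrow>
    (\<exists>v \<in> posQ a E1 \<inter> posQ a E2.
       spanQ (posQ a E1) \<inter> spanQ (posQ a E2) = {q *s v | q :: rat. True})"
proof -
  have "finite E1" "finite E2"
    using assms(6) by (metis finite_Un finite_atLeastAtMost)+
  then show ?thesis
    unfolding spanQ_posQ_eq_QA[OF \<open>finite E1\<close>] spanQ_posQ_eq_QA[OF \<open>finite E2\<close>]
    using QA_Int_eq_multiples_of_posQ_if_s_gluing[of E1 E2 a] s_gluing_if_QA_Int_eq_multiples_of_posQ[of E1 E2 _ a]
    by metis
qed

end
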